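(* Let $\{D_i:i\in I\}$ be a nonempty family of PvMDs and $D:=\bigcap_{i\in I}D_i$, and suppose $D$ is essential with respect to the family $\{D_i:i\in I\}$. Assume that for every $\mathfrak p\in\operatorname{Spec}(D)$ there exist $f\in D\setminus\mathfrak p$ and a finitely generated ideal $\mathfrak a\subseteq\mathfrak p$ of $D$ such that the set of indices $i\in I$ for which there exists a $t$-prime ideal $\mathfrak q$ of $D_i$ with $f\notin\mathfrak q$ and $\mathfrak a\subseteq\mathfrak q\cap D$ is finite. Then $D$ is a PvMD.
   Context: For an integral domain $R$ with quotient field $K$ and nonzero fractional ideal $I$: $(R:I)=\{x\in K:xI\subseteq R\}$, $I^v=(R:(R:I))$, $I^t=\bigcup\{J^v:J\subseteq I \text{ finitely generated}\}$; $I$ is a $t$-ideal if $I=(0)$ or $I=I^t$; a $t$-prime is a prime $t$-ideal (so $(0)$ is a $t$-prime); $t$-maximal ideals are $t$-ideals maximal among proper $t$-ideals. $R$ is a PvMD if $R_{\mathfrak m}$ is a valuation domain for all $t$-maximal $\mathfrak m$. The $D_i$ are subrings of a common field. $D=\bigcap_i D_i$ is said to be essential with respect to $\{D_i\}$ if the family $\{(D_i)_{\mathfrak q}:\mathfrak q\in t\text{-Spec}(D_i), i\in I\}$ is an essential representation of $D$, i.e. each $(D_i)_{\mathfrak q}$ is a valuation domain equal to $D_{\mathfrak p}$ for some prime $\mathfrak p$ of $D$ (and the intersection of the family is $D$). *)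

theory Defs
  imports Main
begin

text \<open>All rings are subrings of a common ambient field of type 'a.\<close>

definition is_subring :: "'a::field set \<Rightarrow> bool" where
  "is_subring R \<longleftrightarrow> 0 \<in> R \<and> 1 \<in> R \<and>
     (\<forall>x\<in>R. \<forall>y\<in>R. x + y \<in> R \<and> x - y \<in> R \<and> x * y \<in> R)"

definition quot_field :: "'a::field set \<Rightarrow> 'a set" where
  "quot_field R = {a / b | a b. a \<in> R \<and> b \<in> R \<and> b \<noteq> 0}"

definition is_ideal :: "'a::field set \<Rightarrow> 'a set \<Rightarrow> bool" where
  "is_ideal R I \<longleftrightarrow> I \<subseteq> R \<and> 0 \<in> I \<and>
     (\<forall>x\<in>I. \<forall>y\<in>I. x + y \<in> I) \<and> (\<forall>r\<in>R. \<forall>x\<in>I. r * x \<in> I)"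

definition is_prime_ideal :: "'a::field set \<Rightarrow> 'a set \<Rightarrow> bool" where
  "is_prime_ideal R P \<longleftrightarrow> is_ideal R P \<and> P \<noteq> R \<and>
     (\<forall>a\<in>R. \<forall>b\<in>R. a * b \<in> P \<longrightarrow> a \<in> P \<or> b \<in> P)"

definition gen_ideal :: "'a::field set \<Rightarrow> 'a set \<Rightarrow> 'a set" where
  "gen_ideal R S = {(\<Sum>s\<in>S. c s * s) | c. \<forall>s\<in>S. c s \<in> R}"

definition fg_ideal :: "'a::field set \<Rightarrow> 'a set \<Rightarrow> bool" where
  "fg_ideal R J \<longleftrightarrow> (\<exists>S. finite S \<and> S \<subseteq> R \<and> J = gen_ideal R S)"

text \<open>(R:I) = {x \<in> K : x I \<subseteq> R}.  For nonzero I contained in the quotient field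
  of R, any such x automatically lies in the quotient field, so we may take x in the
  ambient field.\<close>
definition colon :: "'a::field set \<Rightarrow> 'a set \<Rightarrow> 'a set" where
  "colon R I = {x. \<forall>y\<in>I. x * y \<in> R}"

definition v_closure :: "'a::field set \<Rightarrow> 'a set \<Rightarrow> 'a set" where
  "v_closure R I = colon R (colon R I)"

definition t_closure :: "'a::field set \<Rightarrow> 'a set \<Rightarrow> 'a set" where
  "t_closure R I = \<Union>{v_closure R J | J. \<exists>S. finite S \<and> S \<subseteq> I \<and>
                         J = gen_ideal R S \<and> J \<noteq> {0}}"

definition is_t_ideal :: "'a::field set \<Rightarrow> 'a set \<Rightarrow> bool" where
  "is_t_ideal R I \<longleftrightarrow> I = {0} \<or> I = t_closure R I"

definition is_t_prime :: "'a::field set \<Rightarrow> 'a set \<Rightarrow> bool" where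
  "is_t_prime R P \<longleftrightarrow> is_prime_ideal R P \<and> is_t_ideal R P"

definition is_t_maximal :: "'a::field set \<Rightarrow> 'a set \<Rightarrow> bool" where
  "is_t_maximal R M \<longleftrightarrow> is_ideal R M \<and> M \<noteq> R \<and> is_t_ideal R M \<and>
     (\<forall>N. is_ideal R N \<and> N \<noteq> R \<and> is_t_ideal R N \<and> M \<subseteq> N \<longrightarrow> N = M)"

definition localization :: "'a::field set \<Rightarrow> 'a set \<Rightarrow> 'a set" where
  "localization R P = {a / s | a s. a \<in> R \<and> s \<in> R \<and> s \<notin> P}"

definition is_valuation_domain :: "'a::field set \<Rightarrow> bool" where
  "is_valuation_domain V \<longleftrightarrow> is_subring V \<and>
     (\<forall>x\<in>quot_field V. x \<noteq> 0 \<longrightarrow> x \<in> V \<or> inverse x \<in> V)"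

definition is_PvMD :: "'a::field set \<Rightarrow> bool" where
  "is_PvMD R \<longleftrightarrow> is_subring R \<and>
     (\<forall>M. is_t_maximal R M \<longrightarrow> is_valuation_domain (localization R M))"

definition essential_wrt :: "'i set \<Rightarrow> ('i \<Rightarrow> 'a::field set) \<Rightarrow> bool" where
  "essential_wrt I Ds \<longleftrightarrow>
     (let D = (\<Inter>i\<in>I. Ds i) in
       (\<forall>i\<in>I. \<forall>q. is_t_prime (Ds i) q \<longrightarrow>
          is_valuation_domain (localization (Ds i) q) \<and>
          (\<exists>p. is_prime_ideal D p \<and> localization (Ds i) q = localization D p)) \<and>
       \<Inter>{localization (Ds i) q | i q. i \<in> I \<and> is_t_prime (Ds i) q} = D)"

end

theory Submission
  imports Defs
begin

text \<open>
  Let M be a t-maximal ideal of D = \<Inter>i\<in>I. D_i and let X be the disjoint union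
  of the t-spectra of the D_i, i.e. the pairs (i, q) with q a t-prime of D_i.  Essentiality
  shows that every finite subset of M lies in some q, so the sets
  {(i, q) \<in> X. S \<subseteq> q} (S \<subseteq> M finite) form a filter base, contained in an ultrafilter U.
  The U-limit of a family of t-primes, {x. x \<in> q for U-almost all (i, q)}, is again a t-prime.
  Since each q \<inter> D is a t-prime of D (its localization is a valuation domain), the limit of
  the contractions is a t-prime containing M, hence equals M.  The finiteness hypothesis
  at M then forces U to concentrate on a single index i, and the limit of the q themselves
  is a t-prime Q of D_i with Q \<inter> D = M; by essentiality D_M = (D_i)_Q is a valuation domain.
\<close>

section \<open>Ultrafilters\<close>

definition ultrafilter :: "'x filter \<Rightarrow> bool" where
  "ultrafilter U \<longleftrightarrow> U \<noteq> bot \<and> (\<forall>P. eventually P U \<or> eventually (\<lambda>x. \<not> P x) U)"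

text \<open>The meet of a nonempty chain of proper filters is proper: an event holding in the meet
  already holds in a member of the chain.  This is the chain condition for Zorn's lemma.\<close>
lemma Inf_chain_not_bot:
  fixes C :: "'x filter set"
  assumes "C \<noteq> {}" "bot \<notin> C" and chain: "\<And>G H. G \<in> C \<Longrightarrow> H \<in> C \<Longrightarrow> G \<le> H \<or> H \<le> G"
  shows "Inf C \<noteq> bot"
proof -
  have directed: "\<exists>K\<in>C. K \<le> inf G H" if "G \<in> C" "H \<in> C" for G H
    using chain[OF that] that by auto
  have "eventually (\<lambda>_. False) (Inf C) \<longleftrightarrow> (\<exists>G\<in>C. eventually (\<lambda>_. False) G)"
    by (rule eventually_Inf_base[OF assms(1) directed])
  then show ?thesis using assms(2) unfolding eventually_False by auto
qed

text \<open>A finest proper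
  filter U below F exists by Zorn's lemma; refining U by any predicate it does not refute
  yields again a proper filter, which by maximality is U itself.\<close>
lemma ultrafilter_exists:
  fixes F :: "'x filter"
  assumes "F \<noteq> bot"
  shows "\<exists>U. U \<le> F \<and> ultrafilter U"
proof -
  define A where "A = {G. G \<le> F \<and> G \<noteq> bot}"
  define finer where "finer G H \<longleftrightarrow> H \<le> G" for G H :: "'x filter"
  have po: "partial_order_on A (relation_of finer A)"
    by (rule partial_order_on_relation_ofI) (auto simp: finer_def)
  have "\<exists>L\<in>A. \<forall>G\<in>C. finer G L" if C: "C \<in> Chains (relation_of finer A)" for C
  proof (cases "C = {}")
    case True
    then show ?thesis using assms unfolding A_def by auto
  next
    case False
    have CA: "C \<subseteq> A" using Chains_relation_of[OF C] .
    have "Inf C \<noteq> bot"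
      using C CA False
      by (intro Inf_chain_not_bot) (auto simp: A_def Chains_def relation_of_def finer_def)
    moreover obtain G where "G \<in> C" using False by blast
    then have "Inf C \<le> F" using CA Inf_lower[of G C] by (auto simp: A_def)
    ultimately show ?thesis
      unfolding A_def finer_def by (blast intro: Inf_lower)
  qed
  then obtain U where U: "U \<in> A" and maximal: "\<And>G. G \<in> A \<Longrightarrow> G \<le> U \<Longrightarrow> G = U"
    using predicate_Zorn[OF po] unfolding finer_def by blast
  have "eventually P U \<or> eventually (\<lambda>x. \<not> P x) U" for P
  proof (rule disjCI)
    assume "\<not> eventually (\<lambda>x. \<not> P x) U"
    then have "inf U (principal {x. P x}) \<noteq> bot"
      by (simp add: eventually_inf_principal flip: eventually_False)
    then have "inf U (principal {x. P x}) \<in> A"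
      using U by (auto simp: A_def intro: le_infI1)
    then have "inf U (principal {x. P x}) = U" using maximal by simp
    moreover have "eventually P (inf U (principal {x. P x}))"
      by (simp add: eventually_inf_principal)
    ultimately show "eventually P U" by simp
  qed
  then show ?thesis using U unfolding A_def ultrafilter_def by blast
qed

lemma ultrafilter_disj:
  assumes U: "ultrafilter U" and PQ: "eventually (\<lambda>x. P x \<or> Q x) U"
  shows "eventually P U \<or> eventually Q U"
proof (rule ccontr)
  assume "\<not> ?thesis"
  then have "eventually (\<lambda>x. \<not> P x) U" "eventually (\<lambda>x. \<not> Q x) U"
    using U unfolding ultrafilter_def by blast+
  with PQ have "eventually (\<lambda>_. False) U"
    by eventually_elim blast
  then show False using U by (simp add: ultrafilter_def)
qed

lemma ultrafilter_finite_disj: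
  assumes U: "ultrafilter U" and K: "finite K" and PK: "eventually (\<lambda>x. \<exists>k\<in>K. P k x) U"
  shows "\<exists>k\<in>K. eventually (P k) U"
proof (rule ccontr)
  assume "\<not> ?thesis"
  then have "\<forall>k\<in>K. eventually (\<lambda>x. \<not> P k x) U"
    using U unfolding ultrafilter_def by blast
  then have "eventually (\<lambda>x. \<forall>k\<in>K. \<not> P k x) U"
    by (rule eventually_ball_finite[OF K])
  with PK have "eventually (\<lambda>_. False) U"
    by eventually_elim blast
  then show False using U by (simp add: ultrafilter_def)
qed

section \<open>Ideals, v-closure and t-closure\<close>

lemma subring_sum:
  assumes "is_subring R" "\<And>s. s \<in> S \<Longrightarrow> f s \<in> R"
  shows "sum f S \<in> R"
  using assms(2)
  by (induction S rule: infinite_finite_induct) (use assms(1) in \<open>auto simp: is_subring_def\<close>)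

lemma ideal_sum:
  assumes "is_ideal R P" "\<And>s. s \<in> S \<Longrightarrow> f s \<in> P"
  shows "sum f S \<in> P"
  using assms(2)
  by (induction S rule: infinite_finite_induct) (use assms(1) in \<open>auto simp: is_ideal_def\<close>)

lemma subring_is_ideal: "is_subring R \<Longrightarrow> is_ideal R R"
  unfolding is_subring_def is_ideal_def by blast

lemma prime_ideal_zero: "is_prime_ideal R P \<Longrightarrow> 0 \<in> P"
  unfolding is_prime_ideal_def is_ideal_def by blast

lemma proper_ideal_one: "is_ideal R P \<Longrightarrow> P \<noteq> R \<Longrightarrow> 1 \<notin> P"
  unfolding is_ideal_def by (metis mult.right_neutral subsetI subset_antisym)

lemma prime_ideal_one: "is_prime_ideal R P \<Longrightarrow> 1 \<notin> P"
  unfolding is_prime_ideal_def using proper_ideal_one by blast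

lemma gen_ideal_subset_ideal:
  assumes P: "is_ideal R P" and "D \<subseteq> R" "S \<subseteq> P"
  shows "gen_ideal D S \<subseteq> P"
proof
  fix x assume "x \<in> gen_ideal D S"
  then obtain c where x: "x = (\<Sum>s\<in>S. c s * s)" and c: "\<forall>s\<in>S. c s \<in> D"
    unfolding gen_ideal_def by blast
  have "c s * s \<in> P" if "s \<in> S" for s
    using P c that assms(2,3) unfolding is_ideal_def by blast
  then show "x \<in> P" unfolding x by (rule ideal_sum[OF P])
qed

lemma gen_ideal_subset: "is_subring R \<Longrightarrow> S \<subseteq> R \<Longrightarrow> gen_ideal R S \<subseteq> R"
  using gen_ideal_subset_ideal[OF subring_is_ideal] by blast

lemma gen_ideal_generator:
  assumes R: "is_subring R" and "finite S" "x \<in> S"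
  shows "x \<in> gen_ideal R S"
proof -
  define c where "c s = (if s = x then 1 else 0 :: 'a)" for s
  have "(\<Sum>s\<in>S. c s * s) = (\<Sum>s\<in>S. if s = x then x else 0)"
    by (rule sum.cong) (auto simp: c_def)
  also have "\<dots> = x" using assms(2,3) by simp
  finally have "(\<Sum>s\<in>S. c s * s) = x" .
  moreover have "\<forall>s\<in>S. c s \<in> R" using R by (auto simp: c_def is_subring_def)
  ultimately show ?thesis unfolding gen_ideal_def by force
qed

lemma gen_ideal_nonzero_generator:
  assumes R: "is_subring R" and "gen_ideal R S \<noteq> {0}"
  shows "\<exists>s\<in>S. s \<noteq> 0"
proof (rule ccontr)
  assume "\<not> ?thesis"
  then have "gen_ideal R S \<subseteq> {0}" unfolding gen_ideal_def by (auto intro: sum.neutral)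
  moreover have "0 \<in> gen_ideal R S"
    using R unfolding gen_ideal_def is_subring_def by (auto intro!: exI[of _ "\<lambda>_. 0"])
  ultimately show False using assms(2) by blast
qed

lemma colon_gen_ideal:
  assumes R: "is_subring R" and w: "\<And>s. s \<in> S \<Longrightarrow> w * s \<in> R"
  shows "w \<in> colon R (gen_ideal R S)"
  unfolding colon_def
proof (intro CollectI ballI)
  fix j assume "j \<in> gen_ideal R S"
  then obtain c where j: "j = (\<Sum>s\<in>S. c s * s)" and c: "\<forall>s\<in>S. c s \<in> R"
    unfolding gen_ideal_def by blast
  have "w * j = (\<Sum>s\<in>S. c s * (w * s))"
    unfolding j by (simp add: sum_distrib_left algebra_simps)
  also have "\<dots> \<in> R"
    using R c w by (intro subring_sum) (auto simp: is_subring_def)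
  finally show "w * j \<in> R" .
qed

lemma v_closure_subset:
  assumes "is_subring R" "J \<subseteq> R"
  shows "v_closure R J \<subseteq> R"
proof
  fix x assume "x \<in> v_closure R J"
  moreover have "1 \<in> colon R J" using assms unfolding colon_def by auto
  ultimately have "x * 1 \<in> R" unfolding v_closure_def colon_def by blast
  then show "x \<in> R" by simp
qed

lemma subset_v_closure: "J \<subseteq> v_closure R J"
  unfolding v_closure_def colon_def by (auto simp: mult.commute)

lemma zero_in_v_closure: "is_subring R \<Longrightarrow> 0 \<in> v_closure R J"
  unfolding v_closure_def colon_def is_subring_def by auto

lemma v_closure_subset_t_closure:
  assumes "finite S" "S \<subseteq> Q" "gen_ideal R S \<noteq> {0}"
  shows "v_closure R (gen_ideal R S) \<subseteq> t_closure R Q"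
  unfolding t_closure_def using assms by blast

lemma subset_t_closure:
  assumes R: "is_subring R" and "Q \<noteq> {0}"
  shows "Q \<subseteq> t_closure R Q"
proof
  fix x assume x: "x \<in> Q"
  obtain s where s: "s \<in> Q" "s \<noteq> 0" and xs: "x \<in> v_closure R (gen_ideal R {s})"
  proof (cases "x = 0")
    case True
    obtain s where "s \<in> Q" "s \<noteq> 0" using \<open>Q \<noteq> {0}\<close> x by blast
    with that show ?thesis using True zero_in_v_closure[OF R] by blast
  next
    case False
    then show ?thesis
      using that x gen_ideal_generator[OF R, of "{x}" x] subset_v_closure by blast
  qed
  have "gen_ideal R {s} \<noteq> {0}" using gen_ideal_generator[OF R, of "{s}" s] s(2) by auto
  then show "x \<in> t_closure R Q" using v_closure_subset_t_closure[of "{s}" Q R] s(1) xs by blast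
qed

lemma t_idealI:
  assumes "is_subring R" "Q \<noteq> {0} \<Longrightarrow> t_closure R Q \<subseteq> Q"
  shows "is_t_ideal R Q"
  using subset_t_closure[OF assms(1)] assms(2) unfolding is_t_ideal_def by blast

lemma t_ideal_v_closure:
  assumes R: "is_subring R" and P: "is_t_ideal R P"
    and S: "finite S" "S \<subseteq> P" "gen_ideal R S \<noteq> {0}"
  shows "v_closure R (gen_ideal R S) \<subseteq> P"
proof -
  have "P \<noteq> {0}" using gen_ideal_nonzero_generator[OF R S(3)] S(2) by blast
  then have "P = t_closure R P" using P unfolding is_t_ideal_def by blast
  then show ?thesis using v_closure_subset_t_closure[OF S] by blast
qed

lemma zero_t_prime:
  assumes R: "is_subring R"
  shows "is_t_prime R {0}"
  using R unfolding is_t_prime_def is_prime_ideal_def is_t_ideal_def is_ideal_def is_subring_def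
  by auto

section \<open>Localizations and valuation domains\<close>

lemma localization_memI:
  assumes "x * s \<in> R" "s \<in> R" "s \<notin> P" "s \<noteq> 0"
  shows "x \<in> localization R P"
proof -
  have "x = (x * s) / s" using assms(4) by simp
  then show ?thesis using assms(1-3) unfolding localization_def by blast
qed

lemma subset_localization:
  assumes R: "is_subring R" and P: "is_prime_ideal R P"
  shows "R \<subseteq> localization R P"
  using R prime_ideal_one[OF P] by (auto simp: is_subring_def intro: localization_memI[of _ 1])

lemma inverse_in_localization_iff:
  assumes R: "is_subring R" and P: "is_prime_ideal R P" and x: "x \<in> R" "x \<noteq> 0"
  shows "inverse x \<in> localization R P \<longleftrightarrow> x \<notin> P"
proof
  assume "inverse x \<in> localization R P"
  then obtain a s where as: "a \<in> R" "s \<in> R" "s \<notin> P" "inverse x = a / s"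
    unfolding localization_def by blast
  have "s \<noteq> 0" using as(3) prime_ideal_zero[OF P] by auto
  then have "s = a * x" using as(4) x(2) by (simp add: field_simps)
  then show "x \<notin> P"
    using as(1,3) P unfolding is_prime_ideal_def is_ideal_def by auto
next
  assume "x \<notin> P"
  then show "inverse x \<in> localization R P"
    using R x by (intro localization_memI[of _ x]) (auto simp: is_subring_def)
qed

lemma localization_contraction:
  assumes D: "is_subring D" and R: "is_subring R" and DR: "D \<subseteq> R"
    and P: "is_prime_ideal D P" and Q: "is_prime_ideal R Q"
    and eq: "localization R Q = localization D P"
  shows "P = Q \<inter> D"
proof -
  have "x \<in> P \<longleftrightarrow> x \<in> Q" if x: "x \<in> D" for x
  proof (cases "x = 0")
    case True
    then show ?thesis using prime_ideal_zero[OF P] prime_ideal_zero[OF Q] by simp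
  next
    case False
    have "x \<in> P \<longleftrightarrow> inverse x \<notin> localization D P"
      using inverse_in_localization_iff[OF D P x False] by blast
    also have "\<dots> \<longleftrightarrow> x \<in> Q"
      using inverse_in_localization_iff[OF R Q _ False] x DR eq by auto
    finally show ?thesis .
  qed
  moreover have "P \<subseteq> D" using P unfolding is_prime_ideal_def is_ideal_def by blast
  ultimately show ?thesis by blast
qed

lemma valuation_common_divisor:
  assumes V: "is_valuation_domain V" and "finite S" "S \<subseteq> V" "\<exists>s\<in>S. s \<noteq> 0"
  shows "\<exists>g\<in>S. g \<noteq> 0 \<and> (\<forall>s\<in>S. s / g \<in> V)"
  using assms(2-4)
proof (induction S rule: finite_induct)
  case empty
  then show ?case by simp
next
  case (insert x F)
  have V01: "0 \<in> V" "1 \<in> V" and Vmult: "\<And>u v. u \<in> V \<Longrightarrow> v \<in> V \<Longrightarrow> u * v \<in> V"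
    using V unfolding is_valuation_domain_def is_subring_def by auto
  show ?case
  proof (cases "\<exists>s\<in>F. s \<noteq> 0")
    case False
    then show ?thesis using insert.prems V01 by auto
  next
    case True
    then obtain g where g: "g \<in> F" "g \<noteq> 0" "\<forall>s\<in>F. s / g \<in> V" using insert by auto
    show ?thesis
    proof (cases "x / g \<in> V")
      case True
      then show ?thesis using g by auto
    next
      case False
      then have "x \<noteq> 0" using V01 by auto
      have "x / g \<in> quot_field V" using insert.prems g \<open>x \<noteq> 0\<close> unfolding quot_field_def by blast
      then have "g / x \<in> V"
        using V False g(2) \<open>x \<noteq> 0\<close> unfolding is_valuation_domain_def by (metis divide_eq_0_iff inverse_divide)
      have "s / x \<in> V" if "s \<in> F" for s
      proof -
        have "s / x = (s / g) * (g / x)" using g(2) by simp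
        then show ?thesis using Vmult g(3) that \<open>g / x \<in> V\<close> by metis
      qed
      then show ?thesis using \<open>x \<noteq> 0\<close> V01 by auto
    qed
  qed
qed

lemma common_denominator:
  assumes R: "is_subring R" and P: "is_prime_ideal R P"
    and "finite S" "S \<subseteq> localization R P"
  shows "\<exists>t\<in>R. t \<notin> P \<and> (\<forall>s\<in>S. t * s \<in> R)"
  using assms(3,4)
proof (induction S rule: finite_induct)
  case empty
  then show ?case using R prime_ideal_one[OF P] unfolding is_subring_def by blast
next
  case (insert x F)
  obtain t where t: "t \<in> R" "t \<notin> P" "\<forall>s\<in>F. t * s \<in> R" using insert by auto
  obtain a u where au: "a \<in> R" "u \<in> R" "u \<notin> P" "x = a / u"
    using insert.prems unfolding localization_def by blast
  have "u \<noteq> 0" using au(3) prime_ideal_zero[OF P] by auto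
  have "t * u \<in> R" "t * u \<notin> P"
    using t au P R unfolding is_prime_ideal_def is_subring_def by auto
  moreover have "t * u * x \<in> R" using au t(1) R \<open>u \<noteq> 0\<close> by (simp add: is_subring_def)
  moreover have "t * u * s \<in> R" if "s \<in> F" for s
  proof -
    have "t * u * s = (t * s) * u" by (simp add: algebra_simps)
    then show ?thesis using t(3) that au(2) R unfolding is_subring_def by metis
  qed
  ultimately show ?case by blast
qed

lemma valuation_prime_v_closure:
  assumes R: "is_subring R" and P: "is_prime_ideal R P"
    and V: "is_valuation_domain (localization R P)"
    and S: "finite S" "S \<subseteq> P" "gen_ideal R S \<noteq> {0}"
    and z: "z \<in> v_closure R (gen_ideal R S)"
  shows "z \<in> P"
proof -
  have PR: "P \<subseteq> R" using P unfolding is_prime_ideal_def is_ideal_def by blast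
  obtain g where g: "g \<in> S" "g \<noteq> 0" "\<forall>s\<in>S. s / g \<in> localization R P"
    using valuation_common_divisor[OF V S(1)] S(2) PR subset_localization[OF R P]
      gen_ideal_nonzero_generator[OF R S(3)] by blast
  obtain t where t: "t \<in> R" "t \<notin> P" "\<forall>s\<in>S. t * (s / g) \<in> R"
    using common_denominator[OF R P, of "(\<lambda>s. s / g) ` S"] S(1) g(3) by auto
  have "t / g \<in> colon R (gen_ideal R S)"
    using t(3) by (intro colon_gen_ideal[OF R]) (simp add: mult.commute)
  then have "z * (t / g) \<in> R" using z unfolding v_closure_def colon_def by blast
  then have "z * (t / g) * g \<in> P"
    using g(1) S(2) P unfolding is_prime_ideal_def is_ideal_def by blast
  then have "z * t \<in> P" using g(2) by simp
  moreover have "z \<in> R" using v_closure_subset[OF R gen_ideal_subset[OF R]] S(2) PR z by blast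
  ultimately show "z \<in> P" using t(1,2) P unfolding is_prime_ideal_def by blast
qed

lemma valuation_prime_is_t_ideal:
  assumes R: "is_subring R" and P: "is_prime_ideal R P"
    and V: "is_valuation_domain (localization R P)"
  shows "is_t_ideal R P"
proof (rule t_idealI[OF R])
  show "t_closure R P \<subseteq> P"
    unfolding t_closure_def using valuation_prime_v_closure[OF R P V] by blast
qed

section \<open>Limits of t-primes along an ultrafilter\<close>

definition limit_ideal :: "'a::field set \<Rightarrow> 'x filter \<Rightarrow> ('x \<Rightarrow> 'a set) \<Rightarrow> 'a set" where
  "limit_ideal R U P = {x \<in> R. eventually (\<lambda>y. x \<in> P y) U}"

lemma limit_ideal_ideal:
  assumes R: "is_subring R" and ev: "eventually (\<lambda>y. is_ideal R (P y)) U"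
  shows "is_ideal R (limit_ideal R U P)"
  unfolding is_ideal_def
proof (intro conjI ballI)
  let ?Q = "limit_ideal R U P"
  show "?Q \<subseteq> R" unfolding limit_ideal_def by blast
  have "eventually (\<lambda>y. 0 \<in> P y) U"
    using ev by eventually_elim (simp add: is_ideal_def)
  then show "0 \<in> ?Q" using R by (simp add: limit_ideal_def is_subring_def)
next
  fix x y assume "x \<in> limit_ideal R U P" "y \<in> limit_ideal R U P"
  then have "x + y \<in> R" "eventually (\<lambda>u. x \<in> P u) U" "eventually (\<lambda>u. y \<in> P u) U"
    using R by (auto simp: limit_ideal_def is_subring_def)
  moreover from this(2,3) ev have "eventually (\<lambda>u. x + y \<in> P u) U"
    by eventually_elim (auto simp: is_ideal_def)
  ultimately show "x + y \<in> limit_ideal R U P" by (simp add: limit_ideal_def)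
next
  fix r x assume "r \<in> R" "x \<in> limit_ideal R U P"
  then have "r * x \<in> R" "eventually (\<lambda>u. x \<in> P u) U"
    using R by (auto simp: limit_ideal_def is_subring_def)
  moreover from this(2) ev have "eventually (\<lambda>u. r * x \<in> P u) U"
    by eventually_elim (use \<open>r \<in> R\<close> in \<open>auto simp: is_ideal_def\<close>)
  ultimately show "r * x \<in> limit_ideal R U P" by (simp add: limit_ideal_def)
qed

lemma limit_ideal_prime:
  assumes R: "is_subring R" and U: "ultrafilter U"
    and ev: "eventually (\<lambda>y. is_prime_ideal R (P y)) U"
  shows "is_prime_ideal R (limit_ideal R U P)"
proof -
  let ?Q = "limit_ideal R U P"
  have "is_ideal R ?Q"
    using ev by (intro limit_ideal_ideal[OF R]) (auto simp: is_prime_ideal_def elim: eventually_mono)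
  moreover have "?Q \<noteq> R"
  proof
    assume "?Q = R"
    then have "eventually (\<lambda>u. 1 \<in> P u) U" using R by (auto simp: limit_ideal_def is_subring_def)
    with ev have "eventually (\<lambda>_. False) U"
      by eventually_elim (auto dest: prime_ideal_one)
    with U show False by (simp add: ultrafilter_def)
  qed
  moreover have "a \<in> ?Q \<or> b \<in> ?Q" if ab: "a \<in> R" "b \<in> R" "a * b \<in> ?Q" for a b
  proof -
    have "eventually (\<lambda>u. a * b \<in> P u) U" using ab(3) by (simp add: limit_ideal_def)
    with ev have "eventually (\<lambda>u. a \<in> P u \<or> b \<in> P u) U"
      by eventually_elim (use ab(1,2) in \<open>auto simp: is_prime_ideal_def\<close>)
    then show ?thesis using ultrafilter_disj[OF U] ab(1,2) by (auto simp: limit_ideal_def)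
  qed
  ultimately show ?thesis unfolding is_prime_ideal_def by blast
qed

text \<open>Limits of t-ideals are t-ideals: the v-closure of a finitely generated ideal inside the
  limit lies almost surely inside P y.\<close>
lemma limit_ideal_t_ideal:
  assumes R: "is_subring R" and ev: "eventually (\<lambda>y. is_t_ideal R (P y)) U"
  shows "is_t_ideal R (limit_ideal R U P)"
proof (rule t_idealI[OF R], rule subsetI)
  fix z assume "z \<in> t_closure R (limit_ideal R U P)"
  then obtain S where S: "finite S" "S \<subseteq> limit_ideal R U P" "gen_ideal R S \<noteq> {0}"
    and z: "z \<in> v_closure R (gen_ideal R S)"
    unfolding t_closure_def by blast
  have "eventually (\<lambda>u. \<forall>s\<in>S. s \<in> P u) U"
    using S(1,2) by (intro eventually_ball_finite) (auto simp: limit_ideal_def)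
  with ev have "eventually (\<lambda>u. z \<in> P u) U"
    by eventually_elim (use t_ideal_v_closure[OF R _ S(1) _ S(3)] z in blast)
  moreover have "z \<in> R"
    using v_closure_subset[OF R gen_ideal_subset[OF R]] S(2) z
    unfolding limit_ideal_def by blast
  ultimately show "z \<in> limit_ideal R U P" by (simp add: limit_ideal_def)
qed

lemma limit_ideal_t_prime:
  assumes R: "is_subring R" and U: "ultrafilter U"
    and ev: "eventually (\<lambda>y. is_t_prime R (P y)) U"
  shows "is_t_prime R (limit_ideal R U P)"
proof -
  have "eventually (\<lambda>y. is_prime_ideal R (P y)) U" "eventually (\<lambda>y. is_t_ideal R (P y)) U"
    using ev by (auto simp: is_t_prime_def elim: eventually_mono)
  then show ?thesis
    using limit_ideal_prime[OF R U] limit_ideal_t_ideal[OF R] unfolding is_t_prime_def by blast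
qed

section \<open>Essential families of subrings\<close>

text \<open>A nonempty family of subrings D_i whose intersection D is essential with respect to
  it.\<close>
locale essential_family =
  fixes I :: "'i set" and Ds :: "'i \<Rightarrow> 'a::field set"
  assumes nonempty: "I \<noteq> {}"
    and subrings: "\<And>i. i \<in> I \<Longrightarrow> is_subring (Ds i)"
    and essential: "essential_wrt I Ds"
begin

abbreviation D :: "'a set" where
  "D \<equiv> \<Inter>i\<in>I. Ds i"

definition t_spectrum :: "('i \<times> 'a set) set" where
  "t_spectrum = {(i, q). i \<in> I \<and> is_t_prime (Ds i) q}"

lemma D_subset: "i \<in> I \<Longrightarrow> D \<subseteq> Ds i"
  by blast

lemma D_subring: "is_subring D"
  using nonempty subrings unfolding is_subring_def by blast

lemma contraction:
  assumes i: "i \<in> I" and q: "is_t_prime (Ds i) q"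
  shows "is_prime_ideal D (q \<inter> D)" "localization (Ds i) q = localization D (q \<inter> D)"
    "is_valuation_domain (localization D (q \<inter> D))"
proof -
  obtain p where p: "is_prime_ideal D p" "localization (Ds i) q = localization D p"
    and V: "is_valuation_domain (localization (Ds i) q)"
    using essential i q unfolding essential_wrt_def Let_def by blast
  have "p = q \<inter> D"
    using localization_contraction[OF D_subring subrings[OF i] D_subset[OF i] p(1) _ p(2)] q
    unfolding is_t_prime_def by blast
  then show "is_prime_ideal D (q \<inter> D)" "localization (Ds i) q = localization D (q \<inter> D)"
    "is_valuation_domain (localization D (q \<inter> D))"
    using p V by simp_all
qed

lemma contraction_t_prime:
  assumes "i \<in> I" "is_t_prime (Ds i) q"
  shows "is_t_prime D (q \<inter> D)"
  using contraction[OF assms] valuation_prime_is_t_ideal[OF D_subring]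
  unfolding is_t_prime_def by blast

text \<open>If S
  has a nonzero element, 1 is not in the v-closure of (S), so some z \<notin> D satisfies z S \<subseteq> D;
  by essentiality z avoids some (D_i)_q, which forces S \<subseteq> q.\<close>
lemma finite_subset_in_t_prime:
  assumes M: "is_t_ideal D M" "1 \<notin> M" "M \<subseteq> D" and S: "finite S" "S \<subseteq> M"
  shows "\<exists>i\<in>I. \<exists>q. is_t_prime (Ds i) q \<and> S \<subseteq> q"
proof (cases "S \<subseteq> {0}")
  case True
  obtain i where "i \<in> I" using nonempty by blast
  then show ?thesis using True zero_t_prime[OF subrings] by blast
next
  case False
  then obtain s0 where "s0 \<in> S" "s0 \<noteq> 0" by blast
  then have J: "gen_ideal D S \<noteq> {0}" using gen_ideal_generator[OF D_subring S(1)] by blast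
  have "1 \<notin> v_closure D (gen_ideal D S)"
    using t_ideal_v_closure[OF D_subring M(1) S J] M(2) by blast
  then obtain z where z: "z \<in> colon D (gen_ideal D S)" "z \<notin> D"
    unfolding v_closure_def colon_def by auto
  then obtain i q where iq: "i \<in> I" "is_t_prime (Ds i) q" "z \<notin> localization (Ds i) q"
    using essential unfolding essential_wrt_def Let_def by blast
  have "s \<in> q" if s: "s \<in> S" for s
  proof (rule ccontr)
    assume "s \<notin> q"
    moreover have "z * s \<in> Ds i" "s \<in> Ds i"
      using z(1) gen_ideal_generator[OF D_subring S(1) s] s S(2) iq(1) M(3)
      unfolding colon_def by auto
    ultimately have "z \<in> localization (Ds i) q"
      using iq(2) by (intro localization_memI) (auto simp: is_t_prime_def dest: prime_ideal_zero)
    with iq(3) show False ..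
  qed
  then show ?thesis using iq by blast
qed

lemma t_ideal_ultrafilter:
  assumes M: "is_t_ideal D M" "1 \<notin> M" "M \<subseteq> D"
  obtains U where "ultrafilter U" "eventually (\<lambda>y. y \<in> t_spectrum) U"
    "\<And>x. x \<in> M \<Longrightarrow> eventually (\<lambda>y. x \<in> snd y) U"
proof -
  define base where "base S = principal {y \<in> t_spectrum. S \<subseteq> snd y}" for S
  define F where "F = (INF S\<in>{S. finite S \<and> S \<subseteq> M}. base S)"
  have "F \<noteq> bot"
  proof -
    have "F = bot \<longleftrightarrow> (\<exists>S\<in>{S. finite S \<and> S \<subseteq> M}. base S = bot)"
      unfolding F_def
    proof (rule INF_filter_bot_base)
      fix S1 S2 assume "S1 \<in> {S. finite S \<and> S \<subseteq> M}" "S2 \<in> {S. finite S \<and> S \<subseteq> M}"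
      then show "\<exists>S\<in>{S. finite S \<and> S \<subseteq> M}. base S \<le> inf (base S1) (base S2)"
        by (intro bexI[of _ "S1 \<union> S2"]) (auto simp: base_def inf_principal)
    qed
    moreover have "base S \<noteq> bot" if "finite S" "S \<subseteq> M" for S
      using finite_subset_in_t_prime[OF M that]
      by (auto simp: base_def principal_eq_bot_iff t_spectrum_def)
    ultimately show ?thesis by blast
  qed
  then obtain U where U: "U \<le> F" "ultrafilter U"
    using ultrafilter_exists by blast
  have "eventually P U" if "finite S" "S \<subseteq> M" "\<And>y. y \<in> t_spectrum \<Longrightarrow> S \<subseteq> snd y \<Longrightarrow> P y" for S P
  proof (rule filter_leD[OF U(1)])
    have "eventually P (base S)" using that(3) by (auto simp: base_def eventually_principal)
    then show "eventually P F" unfolding F_def using that(1,2) by (intro eventually_INF1) auto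
  qed
  from this[of "{}"] this[of "{x}" for x] show ?thesis
    using that U(2) by auto
qed

lemma contraction_limit_t_prime:
  assumes U: "ultrafilter U" and spec: "eventually (\<lambda>y. y \<in> t_spectrum) U"
  shows "is_t_prime D (limit_ideal D U (\<lambda>y. snd y \<inter> D))"
proof (rule limit_ideal_t_prime[OF D_subring U])
  show "eventually (\<lambda>y. is_t_prime D (snd y \<inter> D)) U"
    using spec by eventually_elim (auto simp: t_spectrum_def intro: contraction_t_prime)
qed

lemma t_maximal_limit:
  assumes M: "is_t_maximal D M"
  obtains U where "ultrafilter U" "eventually (\<lambda>y. y \<in> t_spectrum) U"
    "limit_ideal D U (\<lambda>y. snd y \<inter> D) = M"
proof -
  have M_ideal: "is_ideal D M" "M \<noteq> D" "is_t_ideal D M"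
    and maximal: "\<And>N. is_ideal D N \<Longrightarrow> N \<noteq> D \<Longrightarrow> is_t_ideal D N \<Longrightarrow> M \<subseteq> N \<Longrightarrow> N = M"
    using M unfolding is_t_maximal_def by auto
  have "M \<subseteq> D" using M_ideal(1) unfolding is_ideal_def by blast
  have "1 \<notin> M" using proper_ideal_one[OF M_ideal(1,2)] .
  obtain U where U: "ultrafilter U" and spec: "eventually (\<lambda>y. y \<in> t_spectrum) U"
    and in_M: "\<And>x. x \<in> M \<Longrightarrow> eventually (\<lambda>y. x \<in> snd y) U"
    using t_ideal_ultrafilter[OF M_ideal(3) \<open>1 \<notin> M\<close> \<open>M \<subseteq> D\<close>] by blast
  let ?Q = "limit_ideal D U (\<lambda>y. snd y \<inter> D)"
  have "is_t_prime D ?Q" using contraction_limit_t_prime[OF U spec] .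
  moreover have "M \<subseteq> ?Q"
    using in_M \<open>M \<subseteq> D\<close> unfolding limit_ideal_def by (auto elim: eventually_mono)
  ultimately have "?Q = M"
    using maximal unfolding is_t_prime_def is_prime_ideal_def by blast
  then show ?thesis using that U spec by blast
qed

lemma limit_concentrates:
  assumes U: "ultrafilter U" and spec: "eventually (\<lambda>y. y \<in> t_spectrum) U"
    and lim: "limit_ideal D U (\<lambda>y. snd y \<inter> D) = M"
    and f: "f \<in> D" "f \<notin> M" and a: "fg_ideal D a" "a \<subseteq> M"
    and fin: "finite {i \<in> I. \<exists>q. is_t_prime (Ds i) q \<and> f \<notin> q \<and> a \<subseteq> q \<inter> D}"
  obtains i where "i \<in> I" "eventually (\<lambda>y. fst y = i) U"
proof -
  let ?J = "{i \<in> I. \<exists>q. is_t_prime (Ds i) q \<and> f \<notin> q \<and> a \<subseteq> q \<inter> D}"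
  obtain S where S: "finite S" "S \<subseteq> D" "a = gen_ideal D S"
    using a(1) unfolding fg_ideal_def by blast
  have "a \<subseteq> D" using a(2) lim unfolding limit_ideal_def by blast
  have "S \<subseteq> M" using gen_ideal_generator[OF D_subring S(1)] S(3) a(2) by blast
  then have "eventually (\<lambda>y. \<forall>s\<in>S. s \<in> snd y) U"
    using lim S(1) by (intro eventually_ball_finite) (auto simp: limit_ideal_def elim: eventually_mono)
  moreover have "\<not> eventually (\<lambda>y. f \<in> snd y \<inter> D) U"
    using lim f unfolding limit_ideal_def by blast
  then have "eventually (\<lambda>y. f \<notin> snd y) U"
    using U f(1) unfolding ultrafilter_def by (auto elim: eventually_mono)
  ultimately have "eventually (\<lambda>y. \<exists>i\<in>?J. fst y = i) U"
    using spec
  proof eventually_elim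
    case (elim y)
    then have i: "fst y \<in> I" and q: "is_t_prime (Ds (fst y)) (snd y)"
      by (auto simp: t_spectrum_def)
    have "a \<subseteq> snd y"
      using gen_ideal_subset_ideal[of "Ds (fst y)" "snd y" D S] q D_subset[OF i] elim(1) S(3)
      unfolding is_t_prime_def is_prime_ideal_def by blast
    then show ?case using elim i q \<open>a \<subseteq> D\<close> by blast
  qed
  then obtain i where "i \<in> ?J" "eventually (\<lambda>y. fst y = i) U"
    using ultrafilter_finite_disj[OF U fin, of "\<lambda>i y. fst y = i"] by blast
  then show ?thesis using that by blast
qed

lemma t_maximal_contraction:
  assumes M: "is_t_maximal D M"
    and fin: "\<And>p. is_prime_ideal D p \<Longrightarrow>
           \<exists>f \<in> D - p. \<exists>a. fg_ideal D a \<and> a \<subseteq> p \<and>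
             finite {i \<in> I. \<exists>q. is_t_prime (Ds i) q \<and> f \<notin> q \<and> a \<subseteq> q \<inter> D}"
  shows "\<exists>i\<in>I. \<exists>q. is_t_prime (Ds i) q \<and> M = q \<inter> D"
proof -
  obtain U where U: "ultrafilter U" and spec: "eventually (\<lambda>y. y \<in> t_spectrum) U"
    and lim: "limit_ideal D U (\<lambda>y. snd y \<inter> D) = M"
    using t_maximal_limit[OF M] .
  have "is_prime_ideal D M"
    using contraction_limit_t_prime[OF U spec] lim by (simp add: is_t_prime_def)
  then obtain f a where f: "f \<in> D" "f \<notin> M" and a: "fg_ideal D a" "a \<subseteq> M"
    and finite: "finite {i \<in> I. \<exists>q. is_t_prime (Ds i) q \<and> f \<notin> q \<and> a \<subseteq> q \<inter> D}"
    using fin by blast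
  obtain i where i: "i \<in> I" and at_i: "eventually (\<lambda>y. fst y = i) U"
    using limit_concentrates[OF U spec lim f a finite] by blast
  have "eventually (\<lambda>y. is_t_prime (Ds i) (snd y)) U"
    using spec at_i by eventually_elim (auto simp: t_spectrum_def)
  then have "is_t_prime (Ds i) (limit_ideal (Ds i) U snd)"
    by (rule limit_ideal_t_prime[OF subrings[OF i] U])
  moreover have "limit_ideal (Ds i) U snd \<inter> D = M"
    using lim D_subset[OF i] unfolding limit_ideal_def by auto
  ultimately show ?thesis using i by blast
qed

end

theorem theorem2p14:
  fixes I :: "'i set" and Ds :: "'i \<Rightarrow> 'a::field set"
  assumes "I \<noteq> {}"
    and "\<And>i. i \<in> I \<Longrightarrow> is_PvMD (Ds i)"
    and "essential_wrt I Ds"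
    and "\<And>p. is_prime_ideal (\<Inter>i\<in>I. Ds i) p \<Longrightarrow>
           \<exists>f \<in> (\<Inter>i\<in>I. Ds i) - p. \<exists>a. fg_ideal (\<Inter>i\<in>I. Ds i) a \<and> a \<subseteq> p \<and>
             finite {i \<in> I. \<exists>q. is_t_prime (Ds i) q \<and> f \<notin> q \<and> a \<subseteq> q \<inter> (\<Inter>i\<in>I. Ds i)}"
  shows "is_PvMD (\<Inter>i\<in>I. Ds i)"
proof -
  interpret essential_family I Ds
    using assms(1-3) by unfold_locales (auto simp: is_PvMD_def)
  have "is_valuation_domain (localization D M)" if M: "is_t_maximal D M" for M
  proof -
    obtain i q where "i \<in> I" "is_t_prime (Ds i) q" "M = q \<inter> D"
      using t_maximal_contraction[OF M assms(4)] by blast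
    then show ?thesis using contraction(3) by blast
  qed
  then show ?thesis unfolding is_PvMD_def using D_subring by blast
qed

end
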